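(* Let $1\le p\le2$, let $X$ be a Banach space with $\dim X\ge2$, and let $F=(f_i)_{i\in\mathbb{Z}}\in\ell_p(\mathbb{Z},X)$. Then the closed linear span of $\{F^{(n)}:n\in\mathbb{Z}\}$ is not equal to $\ell_p(\mathbb{Z},X)$.
   Context: $\ell_p(\mathbb{Z},X)$ is the space of sequences $(f_n)_{n\in\mathbb{Z}}$ in $X$ with norm $(\sum_n\|f_n\|^p)^{1/p}<\infty$. For $F=(f_n)_{n\in\mathbb{Z}}$ and $k\in\mathbb{Z}$, $F^{(k)}=(f_{n-k})_{n\in\mathbb{Z}}$. *)

theory Defs
  imports "HOL-Analysis.Analysis"
begin

definition lp_space :: "real \<Rightarrow> (int \<Rightarrow> 'a::real_normed_vector) set" where
  "lp_space p = {f. (\<lambda>n. norm (f n) powr p) summable_on UNIV}"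

definition lp_norm :: "real \<Rightarrow> (int \<Rightarrow> 'a::real_normed_vector) \<Rightarrow> real" where
  "lp_norm p f = (\<Sum>\<^sub>\<infinity>n. norm (f n) powr p) powr (1 / p)"

definition shift_seq :: "int \<Rightarrow> (int \<Rightarrow> 'a) \<Rightarrow> (int \<Rightarrow> 'a)" where
  "shift_seq k F = (\<lambda>n. F (n - k))"

definition translate_span :: "(int \<Rightarrow> 'a::real_vector) \<Rightarrow> (int \<Rightarrow> 'a) set" where
  "translate_span F = {(\<lambda>n. \<Sum>k\<in>S. c k *\<^sub>R shift_seq k F n) | S c. finite S}"

definition closed_translate_span :: "real \<Rightarrow> (int \<Rightarrow> 'a::real_normed_vector) \<Rightarrow> (int \<Rightarrow> 'a) set" where
  "closed_translate_span p F = {G \<in> lp_space p. \<forall>e>0. \<exists>H\<in>translate_span F.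
      lp_norm p (\<lambda>n. G n - H n) < e}"

end

theory Submission
  imports Defs
begin

text \<open>Take a bounded antisymmetric bilinear form \<open>\<omega>\<close> on \<open>X\<close> (it exists by Hahn--Banach
  because \<open>dim X \<ge> 2\<close>) and pair sequences with \<open>F\<close> along the antidiagonal,
  \<open>\<Lambda> D = \<Sum>\<^sub>n \<omega> (D n) (F (-n))\<close>. As \<open>\<ell>\<^sub>p \<subseteq> \<ell>\<^sub>2\<close> for \<open>p \<le> 2\<close>, Cauchy--Schwarz makes
  \<open>\<Lambda>\<close> a bounded functional on \<open>\<ell>\<^sub>p\<close>, and the substitution \<open>n \<mapsto> k - n\<close> together with the
  antisymmetry of \<open>\<omega>\<close> shows that \<open>\<Lambda>\<close> vanishes on every translate of \<open>F\<close>, hence on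
  their closed span. But the sequence that is \<open>x\<close> at \<open>-m\<close> and \<open>0\<close> elsewhere has
  \<open>\<Lambda> = \<omega> x (F m)\<close>, and \<open>\<omega>, x\<close> can be chosen to make this nonzero whenever \<open>F m \<noteq> 0\<close>.
  For \<open>F = 0\<close> the closed span is just \<open>{0}\<close>.\<close>

section \<open>Norming functionals and antisymmetric forms\<close>

text \<open>\<open>R\<close> is the graph of a linear functional on a subspace, bounded above by the norm;
  Hahn--Banach is proved by extending such graphs one dimension at a time.\<close>
definition norm_dominated_graph :: "('a::real_normed_vector \<times> real) set \<Rightarrow> bool" where
  "norm_dominated_graph R \<longleftrightarrow>
     (\<forall>x a b. (x, a) \<in> R \<longrightarrow> (x, b) \<in> R \<longrightarrow> a = b)
   \<and> (\<forall>x a y b. (x, a) \<in> R \<longrightarrow> (y, b) \<in> R \<longrightarrow> (x + y, a + b) \<in> R)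
   \<and> (\<forall>x a c. (x, a) \<in> R \<longrightarrow> (c *\<^sub>R x, c * a) \<in> R)
   \<and> (\<forall>x a. (x, a) \<in> R \<longrightarrow> a \<le> norm x)"

lemma norm_dominated_graphD:
  assumes "norm_dominated_graph R"
  shows norm_dominated_graph_unique: "(x, a) \<in> R \<Longrightarrow> (x, b) \<in> R \<Longrightarrow> a = b"
    and norm_dominated_graph_add: "(x, a) \<in> R \<Longrightarrow> (y, b) \<in> R \<Longrightarrow> (x + y, a + b) \<in> R"
    and norm_dominated_graph_scaleR: "(x, a) \<in> R \<Longrightarrow> (c *\<^sub>R x, c * a) \<in> R"
    and norm_dominated_graph_le_norm: "(x, a) \<in> R \<Longrightarrow> a \<le> norm x"
  using assms unfolding norm_dominated_graph_def by blast+

lemma norm_dominated_graph_zero: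
  assumes "norm_dominated_graph R" and "R \<noteq> {}"
  shows "(0, 0) \<in> R"
proof -
  obtain x a where "(x, a) \<in> R" using assms(2) by auto
  from norm_dominated_graph_scaleR[OF assms(1) this, of 0] show ?thesis by simp
qed

text \<open>The value \<open>c\<close> of the extension at \<open>y\<close> exists because
  \<open>a - \<parallel>x - y\<parallel> \<le> \<parallel>z + y\<parallel> - b\<close> for all \<open>(x, a), (z, b) \<in> R\<close>. The second bound is the
  first one for \<open>(-y, -c)\<close> in place of \<open>(y, c)\<close>.\<close>
lemma norm_dominated_graph_extension_value:
  fixes R :: "('a::real_normed_vector \<times> real) set"
  assumes R: "norm_dominated_graph R" "R \<noteq> {}"
  obtains c where "\<And>x a. (x, a) \<in> R \<Longrightarrow> a + c \<le> norm (x + y)"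
    and "\<And>x a. (x, a) \<in> R \<Longrightarrow> a + (- c) \<le> norm (x + - y)"
proof -
  define V where "V = {a - norm (x - y) | x a. (x, a) \<in> R}"
  have V_le: "v \<le> norm (z + y) - b" if "v \<in> V" "(z, b) \<in> R" for v z b
  proof -
    obtain x a where "(x, a) \<in> R" and v: "v = a - norm (x - y)"
      using \<open>v \<in> V\<close> unfolding V_def by blast
    then have "a + b \<le> norm ((x - y) + (z + y))"
      using norm_dominated_graph_le_norm[OF R(1) norm_dominated_graph_add[OF R(1)]] that(2)
      by (simp add: algebra_simps)
    also have "\<dots> \<le> norm (x - y) + norm (z + y)" by (rule norm_triangle_ineq)
    finally show ?thesis using v by simp
  qed
  have zero: "(0, 0) \<in> R" using norm_dominated_graph_zero[OF R] .
  have "V \<noteq> {}" using zero unfolding V_def by blast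
  moreover have "bdd_above V" using V_le[OF _ zero] by (auto simp: bdd_above_def)
  ultimately have "Sup V \<le> norm (z + y) - b" if "(z, b) \<in> R" for z b
    using V_le[OF _ that] by (intro cSup_least) auto
  moreover have "a - norm (x - y) \<le> Sup V" if "(x, a) \<in> R" for x a
    using that \<open>bdd_above V\<close> by (intro cSup_upper) (auto simp: V_def)
  ultimately show ?thesis by (intro that[of "Sup V"]) force+
qed

lemma norm_dominated_graph_extension_le_norm:
  assumes R: "norm_dominated_graph R"
    and c: "\<And>x a. (x, a) \<in> R \<Longrightarrow> a + c \<le> norm (x + y)"
    and "(x, a) \<in> R" and t: "t > 0"
  shows "a + t * c \<le> norm (x + t *\<^sub>R y)"
proof -
  have "inverse t * a + c \<le> norm (inverse t *\<^sub>R x + y)"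
    using c norm_dominated_graph_scaleR[OF R \<open>(x, a) \<in> R\<close>] by blast
  then have "t * (inverse t * a + c) \<le> t * norm (inverse t *\<^sub>R x + y)"
    using t by (simp add: mult_left_mono)
  also have "\<dots> = norm (t *\<^sub>R (inverse t *\<^sub>R x + y))"
    using t by simp
  also have "t *\<^sub>R (inverse t *\<^sub>R x + y) = x + t *\<^sub>R y"
    using t by (simp add: scaleR_add_right)
  finally show ?thesis using t by (simp add: algebra_simps)
qed

lemma norm_dominated_graph_decomposition_unique:
  assumes R: "norm_dominated_graph R" and y: "y \<notin> fst ` R"
    and "(x, a) \<in> R" "(x', a') \<in> R" and eq: "x + t *\<^sub>R y = x' + t' *\<^sub>R y"
  shows "t = t'"
proof (rule ccontr)
  assume "t \<noteq> t'"
  have "(x' - x, a' - a) \<in> R"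
    using norm_dominated_graph_add[OF R \<open>(x', a') \<in> R\<close>
        norm_dominated_graph_scaleR[OF R \<open>(x, a) \<in> R\<close>, of "-1"]] by simp
  from norm_dominated_graph_scaleR[OF R this, of "inverse (t - t')"]
  have "(inverse (t - t') *\<^sub>R (x' - x), inverse (t - t') * (a' - a)) \<in> R" .
  moreover have "x' - x = (t - t') *\<^sub>R y" using eq by (simp add: algebra_simps)
  ultimately have "(y, inverse (t - t') * (a' - a)) \<in> R" using \<open>t \<noteq> t'\<close> by simp
  with y show False by force
qed

lemma norm_dominated_graph_adjoin:
  assumes R: "norm_dominated_graph R" and y: "y \<notin> fst ` R"
    and c: "\<And>x a. (x, a) \<in> R \<Longrightarrow> a + c \<le> norm (x + y)"
    and c': "\<And>x a. (x, a) \<in> R \<Longrightarrow> a + (- c) \<le> norm (x + - y)"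
  shows "norm_dominated_graph {(x + t *\<^sub>R y, a + t * c) | x a t. (x, a) \<in> R}"
    (is "norm_dominated_graph ?R'")
  unfolding norm_dominated_graph_def
proof (intro conjI allI impI)
  fix w u v assume "(w, u) \<in> ?R'" "(w, v) \<in> ?R'"
  then obtain x a t x' a' t' where h: "(x, a) \<in> R" "(x', a') \<in> R"
    "w = x + t *\<^sub>R y" "u = a + t * c" "w = x' + t' *\<^sub>R y" "v = a' + t' * c" by blast
  then have "t = t'" using norm_dominated_graph_decomposition_unique[OF R y] by metis
  then show "u = v" using h norm_dominated_graph_unique[OF R] by auto
next
  fix w u w' v assume "(w, u) \<in> ?R'" "(w', v) \<in> ?R'"
  then obtain x a t x' a' t' where h: "(x, a) \<in> R" "(x', a') \<in> R"
    "w = x + t *\<^sub>R y" "u = a + t * c" "w' = x' + t' *\<^sub>R y" "v = a' + t' * c" by blast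
  then have "(x + x', a + a') \<in> R" using norm_dominated_graph_add[OF R] by blast
  moreover have "w + w' = (x + x') + (t + t') *\<^sub>R y" "u + v = (a + a') + (t + t') * c"
    using h by (simp_all add: algebra_simps)
  ultimately show "(w + w', u + v) \<in> ?R'" by blast
next
  fix w u k assume "(w, u) \<in> ?R'"
  then obtain x a t where h: "(x, a) \<in> R" "w = x + t *\<^sub>R y" "u = a + t * c" by blast
  then have "(k *\<^sub>R x, k * a) \<in> R" using norm_dominated_graph_scaleR[OF R] by blast
  moreover have "k *\<^sub>R w = k *\<^sub>R x + (k * t) *\<^sub>R y" "k * u = k * a + (k * t) * c"
    using h by (simp_all add: algebra_simps)
  ultimately show "(k *\<^sub>R w, k * u) \<in> ?R'" by blast
next
  fix w u assume "(w, u) \<in> ?R'"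
  then obtain x a t where h: "(x, a) \<in> R" "w = x + t *\<^sub>R y" "u = a + t * c" by blast
  consider "t = 0" | "t > 0" | "- t > 0" by linarith
  then show "u \<le> norm w"
  proof cases
    case 1 then show ?thesis using h norm_dominated_graph_le_norm[OF R] by simp
  next
    case 2 then show ?thesis
      using h norm_dominated_graph_extension_le_norm[OF R c] by simp
  next
    case 3 then show ?thesis
      using h norm_dominated_graph_extension_le_norm[OF R c' h(1) 3] by simp
  qed
qed

lemma norm_dominated_graph_extend:
  fixes R :: "('a::real_normed_vector \<times> real) set"
  assumes R: "norm_dominated_graph R" "R \<noteq> {}" and y: "y \<notin> fst ` R"
  shows "\<exists>R'. norm_dominated_graph R' \<and> R \<subset> R'"
proof -
  obtain c where c: "\<And>x a. (x, a) \<in> R \<Longrightarrow> a + c \<le> norm (x + y)"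
    and c': "\<And>x a. (x, a) \<in> R \<Longrightarrow> a + (- c) \<le> norm (x + - y)"
    using norm_dominated_graph_extension_value[OF R] by blast
  define R' where "R' = {(x + t *\<^sub>R y, a + t * c) | x a t. (x, a) \<in> R}"
  have "norm_dominated_graph R'"
    unfolding R'_def by (rule norm_dominated_graph_adjoin[OF R(1) y c c'])
  moreover have "R \<subseteq> R'"
  proof (rule subrelI)
    fix x a assume "(x, a) \<in> R"
    then have "(x + 0 *\<^sub>R y, a + 0 * c) \<in> R'" unfolding R'_def by blast
    then show "(x, a) \<in> R'" by simp
  qed
  moreover have "(y, c) \<in> R' - R"
    using norm_dominated_graph_zero[OF R] y unfolding R'_def by force
  ultimately show ?thesis by blast
qed

lemma norm_dominated_graph_Union_chain:
  assumes "\<And>R. R \<in> C \<Longrightarrow> norm_dominated_graph R"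
    and chain: "\<And>R S. R \<in> C \<Longrightarrow> S \<in> C \<Longrightarrow> R \<subseteq> S \<or> S \<subseteq> R"
  shows "norm_dominated_graph (\<Union>C)"
proof -
  have common: "\<exists>R\<in>C. u \<in> R \<and> v \<in> R" if "u \<in> \<Union>C" "v \<in> \<Union>C" for u v
    using that chain by blast
  show ?thesis
    unfolding norm_dominated_graph_def
  proof (intro conjI allI impI)
    fix x a b assume "(x, a) \<in> \<Union>C" "(x, b) \<in> \<Union>C"
    then show "a = b" using common assms(1) norm_dominated_graph_unique by metis
  next
    fix x a y b assume "(x, a) \<in> \<Union>C" "(y, b) \<in> \<Union>C"
    then show "(x + y, a + b) \<in> \<Union>C" using common assms(1) norm_dominated_graph_add by blast
  next
    fix x a c assume "(x, a) \<in> \<Union>C"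
    then show "(c *\<^sub>R x, c * a) \<in> \<Union>C" using assms(1) norm_dominated_graph_scaleR by blast
  next
    fix x a assume "(x, a) \<in> \<Union>C"
    then show "a \<le> norm x" using assms(1) norm_dominated_graph_le_norm by blast
  qed
qed

lemma norm_dominated_graph_line:
  "norm_dominated_graph {(c *\<^sub>R x\<^sub>0, c * norm x\<^sub>0) | c. True}"
  unfolding norm_dominated_graph_def
proof (safe, goal_cases)
  case (1 x a b c d) then show ?case by (cases "x\<^sub>0 = 0") (auto simp: scaleR_cancel_right)
next
  case (2 x a y b c d) then show ?case by (auto intro!: exI[of _ "c + d"] simp: algebra_simps)
next
  case (3 x a c d) then show ?case by (auto intro!: exI[of _ "c * d"])
next
  case (4 x a c) then show ?case by (simp add: mult_right_mono)
qed

text \<open>Hahn--Banach: a maximal norm-dominated graph through \<open>(x\<^sub>0, \<parallel>x\<^sub>0\<parallel>)\<close>, obtained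
  by Zorn's lemma, is defined everywhere and hence the graph of a norming functional.\<close>
theorem exists_norming_functional:
  fixes x\<^sub>0 :: "'a::real_normed_vector"
  obtains \<phi> where "linear \<phi>" and "\<And>x. \<bar>\<phi> x\<bar> \<le> norm x" and "\<phi> x\<^sub>0 = norm x\<^sub>0"
proof -
  define \<A> where "\<A> = {R. norm_dominated_graph R \<and> (x\<^sub>0, norm x\<^sub>0) \<in> R}"
  have "(x\<^sub>0, norm x\<^sub>0) \<in> {(c *\<^sub>R x\<^sub>0, c * norm x\<^sub>0) | c. True}" by (auto intro!: exI[of _ 1])
  then have "{(c *\<^sub>R x\<^sub>0, c * norm x\<^sub>0) | c. True} \<in> \<A>"
    using norm_dominated_graph_line unfolding \<A>_def by blast
  then have "\<A> \<noteq> {}" by blast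
  moreover have "\<Union>C \<in> \<A>" if "C \<noteq> {}" "subset.chain \<A> C" for C
    using that norm_dominated_graph_Union_chain[of C] unfolding \<A>_def subset_chain_def by blast
  ultimately obtain M where "M \<in> \<A>" and maximal: "\<And>R. R \<in> \<A> \<Longrightarrow> M \<subseteq> R \<Longrightarrow> R = M"
    using subset_Zorn_nonempty[of \<A>] by blast
  then have M: "norm_dominated_graph M" and x\<^sub>0: "(x\<^sub>0, norm x\<^sub>0) \<in> M" by (auto simp: \<A>_def)
  have total: "\<exists>a. (x, a) \<in> M" for x
  proof (rule ccontr)
    assume "\<nexists>a. (x, a) \<in> M"
    then have "x \<notin> fst ` M" by force
    then obtain R where "norm_dominated_graph R" "M \<subset> R"
      using norm_dominated_graph_extend[OF M] x\<^sub>0 by blast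
    then show False using maximal[of R] x\<^sub>0 by (auto simp: \<A>_def)
  qed
  define \<phi> where "\<phi> x = (THE a. (x, a) \<in> M)" for x
  have graph: "(x, \<phi> x) \<in> M" for x
    unfolding \<phi>_def using total[of x] norm_dominated_graph_unique[OF M] by (metis theI)
  have \<phi>_eq: "\<phi> x = a" if "(x, a) \<in> M" for x a
    using norm_dominated_graph_unique[OF M that graph] by simp
  show ?thesis
  proof
    show "linear \<phi>"
      by (intro linearI \<phi>_eq norm_dominated_graph_add[OF M graph graph])
        (simp add: \<phi>_eq norm_dominated_graph_scaleR[OF M graph])
    show "\<bar>\<phi> x\<bar> \<le> norm x" for x
      using norm_dominated_graph_le_norm[OF M graph, of x]
        norm_dominated_graph_le_norm[OF M norm_dominated_graph_scaleR[OF M graph], of "-1" x]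
      by simp
    show "\<phi> x\<^sub>0 = norm x\<^sub>0" using \<phi>_eq[OF x\<^sub>0] .
  qed
qed

text \<open>\<open>\<omega>\<close> is the wedge product of a functional norming \<open>y\<close> with one norming the
  projection of \<open>z\<close> onto the kernel of the first.\<close>
lemma exists_antisymmetric_form:
  fixes y z :: "'a::real_normed_vector"
  assumes "y \<noteq> 0" and "z \<notin> span {y}"
  obtains \<omega> :: "'a \<Rightarrow> 'a \<Rightarrow> real" and x
  where "bounded_bilinear \<omega>" and "\<forall>u v. \<omega> u v = - \<omega> v u" and "\<omega> x y \<noteq> 0"
proof -
  obtain \<phi>\<^sub>1 where l1: "linear \<phi>\<^sub>1" and b1: "\<And>x. \<bar>\<phi>\<^sub>1 x\<bar> \<le> norm x" and y: "\<phi>\<^sub>1 y = norm y"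
    using exists_norming_functional[of y] by blast
  define x where "x = z - (\<phi>\<^sub>1 z / \<phi>\<^sub>1 y) *\<^sub>R y"
  have x1: "\<phi>\<^sub>1 x = 0" using y \<open>y \<noteq> 0\<close> by (simp add: x_def linear_diff[OF l1] linear_scale[OF l1])
  have "x \<noteq> 0"
    using \<open>z \<notin> span {y}\<close> span_mul[OF span_base[of y "{y}"], of "\<phi>\<^sub>1 z / \<phi>\<^sub>1 y"]
    by (auto simp: x_def scaleR_conv_of_real)
  obtain \<phi>\<^sub>2 where l2: "linear \<phi>\<^sub>2" and b2: "\<And>x. \<bar>\<phi>\<^sub>2 x\<bar> \<le> norm x" and x2: "\<phi>\<^sub>2 x = norm x"
    using exists_norming_functional[of x] by blast
  define \<omega> where "\<omega> u v = \<phi>\<^sub>1 u * \<phi>\<^sub>2 v - \<phi>\<^sub>2 u * \<phi>\<^sub>1 v" for u v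
  have "bounded_bilinear \<omega>"
  proof
    show "\<exists>K. \<forall>u v. norm (\<omega> u v) \<le> norm u * norm v * K"
    proof (intro exI allI)
      fix u v
      have "\<bar>\<omega> u v\<bar> \<le> \<bar>\<phi>\<^sub>1 u\<bar> * \<bar>\<phi>\<^sub>2 v\<bar> + \<bar>\<phi>\<^sub>2 u\<bar> * \<bar>\<phi>\<^sub>1 v\<bar>"
        unfolding \<omega>_def abs_mult[symmetric] by (rule abs_triangle_ineq4)
      also have "\<dots> \<le> norm u * norm v + norm u * norm v"
        using b1 b2 by (intro add_mono mult_mono) auto
      finally show "norm (\<omega> u v) \<le> norm u * norm v * 2" by simp
    qed
  qed (simp_all add: \<omega>_def linear_add[OF l1] linear_add[OF l2] linear_scale[OF l1]
      linear_scale[OF l2] algebra_simps)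
  moreover have "\<forall>u v. \<omega> u v = - \<omega> v u" by (simp add: \<omega>_def)
  moreover have "\<omega> x y \<noteq> 0" using x1 x2 y \<open>x \<noteq> 0\<close> \<open>y \<noteq> 0\<close> by (simp add: \<omega>_def)
  ultimately show ?thesis by (rule that)
qed

section \<open>Sequence spaces\<close>

lemma lp_space_add:
  fixes f g :: "int \<Rightarrow> 'a::real_normed_vector"
  assumes f: "f \<in> lp_space p" and g: "g \<in> lp_space p" and "1 \<le> p"
  shows "(\<lambda>n. f n + g n) \<in> lp_space p"
proof -
  have "(\<lambda>n. 2 powr p * (norm (f n) powr p + norm (g n) powr p)) summable_on UNIV"
    using f g unfolding lp_space_def by (intro summable_on_cmult_right summable_on_add) auto
  moreover have "norm (f n + g n) powr p \<le> 2 powr p * (norm (f n) powr p + norm (g n) powr p)" for n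
  proof -
    have "norm (f n + g n) powr p \<le> (2 * max (norm (f n)) (norm (g n))) powr p"
      using \<open>1 \<le> p\<close> norm_triangle_ineq[of "f n" "g n"] by (intro powr_mono2) auto
    also have "\<dots> = 2 powr p * max (norm (f n)) (norm (g n)) powr p" by (simp add: powr_mult)
    also have "\<dots> \<le> 2 powr p * (norm (f n) powr p + norm (g n) powr p)"
      by (intro mult_left_mono) (auto simp: max_def)
    finally show ?thesis .
  qed
  ultimately show ?thesis
    unfolding lp_space_def by (auto intro: summable_on_comparison_test)
qed

lemma lp_space_scaleR:
  assumes "f \<in> lp_space p"
  shows "(\<lambda>n. c *\<^sub>R f n) \<in> lp_space p"
  using summable_on_cmult_right[of _ UNIV "\<bar>c\<bar> powr p"] assms
  by (simp add: lp_space_def powr_mult)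

lemma lp_space_diff:
  assumes "f \<in> lp_space p" and "g \<in> lp_space p" and "1 \<le> p"
  shows "(\<lambda>n. f n - g n) \<in> lp_space p"
  using lp_space_add[OF assms(1) lp_space_scaleR[OF assms(2), of "-1"] assms(3)] by simp

lemma lp_space_shift_seq:
  assumes "f \<in> lp_space p"
  shows "shift_seq k f \<in> lp_space p"
proof -
  have "bij_betw (\<lambda>n. n - k) UNIV UNIV" by (rule bij_betwI[where g = "\<lambda>n. n + k"]) auto
  from summable_on_reindex_bij_betw[OF this, of "\<lambda>n. norm (f n) powr p"] show ?thesis
    using assms by (simp add: lp_space_def shift_seq_def)
qed

lemma translate_span_subset_lp_space:
  assumes "F \<in> lp_space p" and "1 \<le> p"
  shows "translate_span F \<subseteq> lp_space p"
proof -
  have "(\<lambda>n. \<Sum>k\<in>S. c k *\<^sub>R shift_seq k F n) \<in> lp_space p" if "finite S" for S c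
    using that
  proof (induction S rule: finite_induct)
    case empty then show ?case by (simp add: lp_space_def)
  next
    case (insert k S)
    then show ?case
      using lp_space_add[OF lp_space_scaleR[OF lp_space_shift_seq[OF assms(1)]] insert.IH assms(2)]
      by simp
  qed
  then show ?thesis unfolding translate_span_def by blast
qed

lemma lp_space_single: "(\<lambda>n. if n = m then x else 0) \<in> lp_space p"
  unfolding lp_space_def
  by (auto intro!: finite_nonzero_values_imp_summable_on intro: finite_subset[of _ "{m}"])

lemma lp_norm_nonneg: "lp_norm p f \<ge> 0"
  by (simp add: lp_norm_def)

lemma norm_le_lp_norm:
  assumes "f \<in> lp_space p" and "1 \<le> p"
  shows "norm (f n) \<le> lp_norm p f"
proof -
  have "norm (f n) powr p \<le> (\<Sum>\<^sub>\<infinity>m. norm (f m) powr p)"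
    using finite_sum_le_infsum[of "\<lambda>m. norm (f m) powr p" UNIV "{n}"] assms(1)
    by (simp add: lp_space_def)
  then have "(norm (f n) powr p) powr (1 / p) \<le> lp_norm p f"
    unfolding lp_norm_def using assms(2) by (intro powr_mono2) auto
  then show ?thesis using assms(2) by (simp add: powr_powr)
qed

text \<open>The inclusion \<open>\<ell>\<^sub>p \<subseteq> \<ell>\<^sub>2\<close> for \<open>p \<le> 2\<close>: since \<open>\<parallel>f n\<parallel> \<le> \<parallel>f\<parallel>\<^sub>p\<close>, we have
  \<open>\<parallel>f n\<parallel>\<^sup>2 \<le> \<parallel>f\<parallel>\<^sub>p\<^bsup>2 - p\<^esup> \<parallel>f n\<parallel>\<^sup>p\<close>.\<close>
lemma lp_space_subset_l2:
  assumes f: "f \<in> lp_space p" and p: "1 \<le> p" "p \<le> 2"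
  shows "(\<lambda>n. (norm (f n))\<^sup>2) summable_on UNIV"
    and "sqrt (\<Sum>\<^sub>\<infinity>n. (norm (f n))\<^sup>2) \<le> lp_norm p f"
proof -
  define L where "L = lp_norm p f"
  have sum_p: "(\<lambda>n. norm (f n) powr p) summable_on UNIV" using f by (simp add: lp_space_def)
  have "L \<ge> 0" by (simp add: L_def lp_norm_nonneg)
  have sum_L: "(\<Sum>\<^sub>\<infinity>n. norm (f n) powr p) = L powr p"
    using p by (simp add: L_def lp_norm_def powr_powr infsum_nonneg)
  have pointwise: "(norm (f n))\<^sup>2 \<le> L powr (2 - p) * norm (f n) powr p" for n
  proof -
    have "(norm (f n))\<^sup>2 = norm (f n) powr (2 - p) * norm (f n) powr p"
      by (simp flip: powr_add)
    also have "\<dots> \<le> L powr (2 - p) * norm (f n) powr p"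
      using norm_le_lp_norm[OF f p(1)] p(2) by (intro mult_right_mono powr_mono2) (auto simp: L_def)
    finally show ?thesis .
  qed
  have bound_summable: "(\<lambda>n. L powr (2 - p) * norm (f n) powr p) summable_on UNIV"
    using sum_p by (rule summable_on_cmult_right)
  show summable: "(\<lambda>n. (norm (f n))\<^sup>2) summable_on UNIV"
    using bound_summable pointwise by (rule summable_on_comparison_test) simp
  have "(\<Sum>\<^sub>\<infinity>n. (norm (f n))\<^sup>2) \<le> (\<Sum>\<^sub>\<infinity>n. L powr (2 - p) * norm (f n) powr p)"
    using summable bound_summable pointwise by (rule infsum_mono)
  also have "\<dots> = L powr (2 - p) * L powr p" using sum_L by (simp add: infsum_cmult_right')
  also have "\<dots> = L\<^sup>2" using \<open>L \<ge> 0\<close> by (simp flip: powr_add)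
  finally show "sqrt (\<Sum>\<^sub>\<infinity>n. (norm (f n))\<^sup>2) \<le> lp_norm p f"
    using \<open>L \<ge> 0\<close> real_sqrt_le_mono[of _ "L\<^sup>2"] by (simp add: L_def)
qed

lemma has_sum_sum:
  fixes g :: "'k \<Rightarrow> 'i \<Rightarrow> 'a::topological_comm_monoid_add"
  assumes "finite S" and "\<And>k. k \<in> S \<Longrightarrow> (g k has_sum s k) A"
  shows "((\<lambda>i. \<Sum>k\<in>S. g k i) has_sum (\<Sum>k\<in>S. s k)) A"
  using assms by (induction S rule: finite_induct) (auto intro: has_sum_add)

lemma abs_mult_le_weighted_squares:
  fixes u v t :: real
  assumes "t > 0"
  shows "\<bar>u * v\<bar> \<le> t / 2 * u\<^sup>2 + 1 / (2 * t) * v\<^sup>2"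
proof -
  have "0 \<le> (t * \<bar>u\<bar> - \<bar>v\<bar>)\<^sup>2" by simp
  then have "2 * t * \<bar>u * v\<bar> \<le> t\<^sup>2 * u\<^sup>2 + v\<^sup>2"
    using assms by (simp add: power2_eq_square algebra_simps abs_mult)
  then show ?thesis using assms by (simp add: field_simps power2_eq_square)
qed

lemma Cauchy_Schwarz_infsum:
  fixes x y :: "'i \<Rightarrow> real"
  assumes x: "(\<lambda>i. (x i)\<^sup>2) summable_on A" and y: "(\<lambda>i. (y i)\<^sup>2) summable_on A"
  shows "(\<lambda>i. \<bar>x i * y i\<bar>) summable_on A"
    and "(\<Sum>\<^sub>\<infinity>i\<in>A. \<bar>x i * y i\<bar>) \<le> sqrt (\<Sum>\<^sub>\<infinity>i\<in>A. (x i)\<^sup>2) * sqrt (\<Sum>\<^sub>\<infinity>i\<in>A. (y i)\<^sup>2)"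
proof -
  define X where "X = (\<Sum>\<^sub>\<infinity>i\<in>A. (x i)\<^sup>2)"
  define Y where "Y = (\<Sum>\<^sub>\<infinity>i\<in>A. (y i)\<^sup>2)"
  show summable: "(\<lambda>i. \<bar>x i * y i\<bar>) summable_on A"
    using abs_summable_product[of x A y] x y by (simp add: power2_eq_square)
  have "X \<ge> 0" "Y \<ge> 0" by (simp_all add: X_def Y_def infsum_nonneg)
  show "(\<Sum>\<^sub>\<infinity>i\<in>A. \<bar>x i * y i\<bar>) \<le> sqrt X * sqrt Y"
  proof (cases "X = 0 \<or> Y = 0")
    case True
    then have "\<forall>i\<in>A. x i = 0 \<or> y i = 0"
      using nonneg_infsum_le_0D[OF _ x] nonneg_infsum_le_0D[OF _ y] by (auto simp: X_def Y_def)
    then have "(\<Sum>\<^sub>\<infinity>i\<in>A. \<bar>x i * y i\<bar>) = 0" by (intro infsum_0) auto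
    then show ?thesis using \<open>X \<ge> 0\<close> \<open>Y \<ge> 0\<close> by simp
  next
    case False
    define t where "t = sqrt Y / sqrt X"
    have "t > 0" using False \<open>X \<ge> 0\<close> \<open>Y \<ge> 0\<close> by (simp add: t_def)
    have x': "(\<lambda>i. t / 2 * (x i)\<^sup>2) summable_on A"
      and y': "(\<lambda>i. 1 / (2 * t) * (y i)\<^sup>2) summable_on A"
      by (rule summable_on_cmult_right[OF x], rule summable_on_cmult_right[OF y])
    have "(\<Sum>\<^sub>\<infinity>i\<in>A. \<bar>x i * y i\<bar>) \<le> (\<Sum>\<^sub>\<infinity>i\<in>A. t / 2 * (x i)\<^sup>2 + 1 / (2 * t) * (y i)\<^sup>2)"
      using summable summable_on_add[OF x' y'] abs_mult_le_weighted_squares[OF \<open>t > 0\<close>]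
      by (intro infsum_mono) auto
    also have "\<dots> = t / 2 * X + 1 / (2 * t) * Y"
      unfolding infsum_add[OF x' y'] X_def Y_def
      by (simp only: infsum_cmult_right[OF x] infsum_cmult_right[OF y])
    also have "\<dots> = sqrt X * sqrt Y"
      using False \<open>X \<ge> 0\<close> \<open>Y \<ge> 0\<close> by (simp add: t_def field_simps real_sqrt_mult[symmetric])
    finally show ?thesis .
  qed
qed

section \<open>The antidiagonal pairing\<close>

definition antidiagonal_pairing :: "('a \<Rightarrow> 'a \<Rightarrow> real) \<Rightarrow> (int \<Rightarrow> 'a) \<Rightarrow> (int \<Rightarrow> 'a) \<Rightarrow> real" where
  "antidiagonal_pairing \<omega> D F = (\<Sum>\<^sub>\<infinity>n. \<omega> (D n) (F (- n)))"

lemma antidiagonal_pairing_bound: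
  fixes \<omega> :: "'a::real_normed_vector \<Rightarrow> 'a \<Rightarrow> real"
  assumes K: "\<And>u v. \<bar>\<omega> u v\<bar> \<le> norm u * norm v * K" "K \<ge> 0"
    and D: "D \<in> lp_space p" and F: "F \<in> lp_space p" and p: "1 \<le> p" "p \<le> 2"
  shows "(\<lambda>n. \<omega> (D n) (F (- n))) summable_on UNIV"
    and "\<bar>antidiagonal_pairing \<omega> D F\<bar> \<le> K * lp_norm p D * lp_norm p F"
proof -
  define x where "x n = norm (D n)" for n
  define y where "y n = norm (F (- n))" for n
  have neg: "bij_betw uminus UNIV (UNIV :: int set)" by (rule bij_betwI[where g = uminus]) auto
  have x: "(\<lambda>n. (x n)\<^sup>2) summable_on UNIV" and sqrt_x: "sqrt (\<Sum>\<^sub>\<infinity>n. (x n)\<^sup>2) \<le> lp_norm p D"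
    unfolding x_def using lp_space_subset_l2[OF D p] by auto
  have y: "(\<lambda>n. (y n)\<^sup>2) summable_on UNIV" and sqrt_y: "sqrt (\<Sum>\<^sub>\<infinity>n. (y n)\<^sup>2) \<le> lp_norm p F"
    unfolding y_def
    using lp_space_subset_l2[OF F p] summable_on_reindex_bij_betw[OF neg, of "\<lambda>n. (norm (F n))\<^sup>2"]
      infsum_reindex_bij_betw[OF neg, of "\<lambda>n. (norm (F n))\<^sup>2"] by auto
  note xy = Cauchy_Schwarz_infsum[OF x y]
  have term_le: "\<bar>\<omega> (D n) (F (- n))\<bar> \<le> K * \<bar>x n * y n\<bar>" for n
    using K(1)[of "D n" "F (- n)"] by (simp add: x_def y_def abs_mult mult.commute)
  have K_xy: "(\<lambda>n. K * \<bar>x n * y n\<bar>) summable_on UNIV"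
    using xy(1) by (rule summable_on_cmult_right)
  have abs_terms: "(\<lambda>n. \<bar>\<omega> (D n) (F (- n))\<bar>) summable_on UNIV"
    using K_xy term_le abs_ge_zero by (rule summable_on_comparison_test)
  then show "(\<lambda>n. \<omega> (D n) (F (- n))) summable_on UNIV"
    using summable_on_iff_abs_summable_on_real by force
  have "\<bar>antidiagonal_pairing \<omega> D F\<bar> \<le> (\<Sum>\<^sub>\<infinity>n. \<bar>\<omega> (D n) (F (- n))\<bar>)"
    unfolding antidiagonal_pairing_def using norm_infsum_bound[of "\<lambda>n. \<omega> (D n) (F (- n))" UNIV]
      abs_terms by simp
  also have "\<dots> \<le> (\<Sum>\<^sub>\<infinity>n. K * \<bar>x n * y n\<bar>)"
    using abs_terms K_xy term_le by (intro infsum_mono) auto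
  also have "\<dots> = K * (\<Sum>\<^sub>\<infinity>n. \<bar>x n * y n\<bar>)" by (rule infsum_cmult_right) (use xy(1) in auto)
  also have "\<dots> \<le> K * (lp_norm p D * lp_norm p F)"
    using xy(2) sqrt_x sqrt_y \<open>K \<ge> 0\<close>
    by (intro mult_left_mono order.trans[OF xy(2)] mult_mono) (auto simp: lp_norm_nonneg infsum_nonneg)
  finally show "\<bar>antidiagonal_pairing \<omega> D F\<bar> \<le> K * lp_norm p D * lp_norm p F" by simp
qed

text \<open>Substituting \<open>n \<mapsto> k - n\<close> swaps the two arguments of \<open>\<omega>\<close>, so antisymmetry makes
  the pairing of a translate of \<open>F\<close> with \<open>F\<close> equal to its own negative.\<close>
lemma antidiagonal_pairing_shift_seq_self:
  assumes antisym: "\<forall>u v. \<omega> u v = - \<omega> v u"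
  shows "antidiagonal_pairing \<omega> (shift_seq k F) F = 0"
proof -
  have "bij_betw (\<lambda>n. k - n) UNIV (UNIV :: int set)" by (rule bij_betwI[where g = "\<lambda>n. k - n"]) auto
  from infsum_reindex_bij_betw[OF this, of "\<lambda>n. \<omega> (F (n - k)) (F (- n))"]
  have "antidiagonal_pairing \<omega> (shift_seq k F) F = (\<Sum>\<^sub>\<infinity>n. \<omega> (F (- n)) (F (n - k)))"
    by (simp add: antidiagonal_pairing_def shift_seq_def)
  also have "\<dots> = - antidiagonal_pairing \<omega> (shift_seq k F) F"
    by (simp add: antidiagonal_pairing_def shift_seq_def antisym[rule_format, of "F (- _)"] infsum_uminus)
  finally show ?thesis by simp
qed

lemma antidiagonal_pairing_translate_span:
  fixes \<omega> :: "'a::real_normed_vector \<Rightarrow> 'a \<Rightarrow> real"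
  assumes \<omega>: "bounded_bilinear \<omega>" "\<forall>u v. \<omega> u v = - \<omega> v u"
    and F: "F \<in> lp_space p" and p: "1 \<le> p" "p \<le> 2" and H: "H \<in> translate_span F"
  shows "antidiagonal_pairing \<omega> H F = 0"
proof -
  obtain K where K: "K \<ge> 0" "\<And>u v. \<bar>\<omega> u v\<bar> \<le> norm u * norm v * K"
    using bounded_bilinear.nonneg_bounded[OF \<omega>(1)] by auto
  obtain S c where "finite S" and H_eq: "H = (\<lambda>n. \<Sum>k\<in>S. c k *\<^sub>R shift_seq k F n)"
    using H unfolding translate_span_def by blast
  have "((\<lambda>n. c k * \<omega> (shift_seq k F n) (F (- n))) has_sum 0) UNIV" for k
  proof -
    have "((\<lambda>n. \<omega> (shift_seq k F n) (F (- n))) has_sum 0) UNIV"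
      using antidiagonal_pairing_bound(1)[OF K(2,1) lp_space_shift_seq[OF F] F p]
        antidiagonal_pairing_shift_seq_self[OF \<omega>(2)]
      by (simp add: antidiagonal_pairing_def has_sum_iff)
    then show ?thesis using has_sum_cmult_right by fastforce
  qed
  then have "((\<lambda>n. \<Sum>k\<in>S. c k * \<omega> (shift_seq k F n) (F (- n))) has_sum 0) UNIV"
    using has_sum_sum[OF \<open>finite S\<close>, where s = "\<lambda>_. 0"
        and g = "\<lambda>k n. c k * \<omega> (shift_seq k F n) (F (- n))"] by simp
  then show ?thesis
    unfolding antidiagonal_pairing_def H_eq
    by (simp add: bounded_bilinear.sum_left[OF \<omega>(1)] bounded_bilinear.scaleR_left[OF \<omega>(1)]
        infsumI)
qed

lemma not_in_closed_translate_span_antidiagonal_pairing: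
  fixes \<omega> :: "'a::real_normed_vector \<Rightarrow> 'a \<Rightarrow> real"
  assumes \<omega>: "bounded_bilinear \<omega>" "\<forall>u v. \<omega> u v = - \<omega> v u"
    and F: "F \<in> lp_space p" and p: "1 \<le> p" "p \<le> 2"
    and nonzero: "antidiagonal_pairing \<omega> G F \<noteq> 0"
  shows "G \<notin> closed_translate_span p F"
proof
  assume G: "G \<in> closed_translate_span p F"
  obtain K where K: "K \<ge> 0" "\<And>u v. \<bar>\<omega> u v\<bar> \<le> norm u * norm v * K"
    using bounded_bilinear.nonneg_bounded[OF \<omega>(1)] by auto
  define \<delta> where "\<delta> = \<bar>antidiagonal_pairing \<omega> G F\<bar>"
  define C where "C = K * lp_norm p F + 1"
  have "C > 0" using K(1) lp_norm_nonneg[of p F] by (simp add: C_def add_nonneg_pos)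
  have "\<delta> > 0" using nonzero by (simp add: \<delta>_def)
  obtain H where H: "H \<in> translate_span F" and close: "lp_norm p (\<lambda>n. G n - H n) < \<delta> / C"
    using G divide_pos_pos[OF \<open>\<delta> > 0\<close> \<open>C > 0\<close>] unfolding closed_translate_span_def by blast
  have H_lp: "H \<in> lp_space p" using translate_span_subset_lp_space[OF F p(1)] H by blast
  have D_lp: "(\<lambda>n. G n - H n) \<in> lp_space p"
    using G H_lp p by (intro lp_space_diff) (auto simp: closed_translate_span_def)
  have "antidiagonal_pairing \<omega> G F
      = antidiagonal_pairing \<omega> (\<lambda>n. G n - H n) F + antidiagonal_pairing \<omega> H F"
    unfolding antidiagonal_pairing_def
    using infsum_add[OF antidiagonal_pairing_bound(1)[OF K(2,1) D_lp F p]
        antidiagonal_pairing_bound(1)[OF K(2,1) H_lp F p]]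
    by (simp add: bounded_bilinear.add_left[OF \<omega>(1), symmetric])
  then have "\<delta> = \<bar>antidiagonal_pairing \<omega> (\<lambda>n. G n - H n) F\<bar>"
    using antidiagonal_pairing_translate_span[OF \<omega> F p H] by (simp add: \<delta>_def)
  also have "\<dots> \<le> K * lp_norm p (\<lambda>n. G n - H n) * lp_norm p F"
    by (rule antidiagonal_pairing_bound(2)[OF K(2,1) D_lp F p])
  also have "\<dots> \<le> K * lp_norm p F * (\<delta> / C)"
    using mult_left_mono[OF less_imp_le[OF close] mult_nonneg_nonneg[OF K(1) lp_norm_nonneg]]
    by (simp add: mult_ac)
  also have "\<dots> < \<delta>"
    using \<open>\<delta> > 0\<close> \<open>C > 0\<close> by (simp add: C_def field_simps)
  finally show False by simp
qed

lemma antidiagonal_pairing_single: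
  assumes "bounded_bilinear \<omega>"
  shows "antidiagonal_pairing \<omega> (\<lambda>n. if n = m then x else 0) F = \<omega> x (F (- m))"
proof -
  have "antidiagonal_pairing \<omega> (\<lambda>n. if n = m then x else 0) F
      = (\<Sum>\<^sub>\<infinity>n\<in>{m}. \<omega> (if n = m then x else 0) (F (- n)))"
    unfolding antidiagonal_pairing_def
    by (rule infsum_cong_neutral) (auto simp: bounded_bilinear.zero_left[OF assms])
  then show ?thesis by simp
qed

lemma not_in_closed_translate_span_zero:
  assumes "1 \<le> p" and "x \<noteq> 0"
  shows "(\<lambda>n. if n = 0 then x else 0) \<notin> closed_translate_span p (\<lambda>_. 0 :: 'a::real_normed_vector)"
proof
  assume "(\<lambda>n. if n = 0 then x else 0) \<in> closed_translate_span p (\<lambda>_. 0 :: 'a)"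
  moreover have "norm x > 0" using \<open>x \<noteq> 0\<close> by simp
  ultimately obtain H where "H \<in> translate_span (\<lambda>_. 0 :: 'a)"
    and close: "lp_norm p (\<lambda>n. (if n = 0 then x else 0) - H n) < norm x"
    unfolding closed_translate_span_def by blast
  then obtain S c where "H = (\<lambda>n. \<Sum>k\<in>S. c k *\<^sub>R shift_seq k (\<lambda>_. 0 :: 'a) n)"
    unfolding translate_span_def by blast
  then have "H = (\<lambda>_. 0)" by (simp add: shift_seq_def)
  then have "norm x \<le> lp_norm p (\<lambda>n. (if n = 0 then x else 0) - H n)"
    using norm_le_lp_norm[OF lp_space_single[of 0 x p] assms(1), of 0] by simp
  with close show False by simp
qed

theorem proposition3p7:
  fixes p :: real and F :: "int \<Rightarrow> 'a::banach"
  assumes "1 \<le> p" and "p \<le> 2"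
    and "\<not> (\<exists>b::'a. UNIV \<subseteq> span {b})"
    and "F \<in> lp_space p"
  shows "closed_translate_span p F \<noteq> lp_space p"
proof (cases "F = (\<lambda>_. 0)")
  case True
  obtain x :: 'a where "x \<notin> span {0}" using assms(3) by blast
  then have "x \<noteq> 0" using span_zero by blast
  then have "(\<lambda>n. if n = 0 then x else 0) \<notin> closed_translate_span p F"
    using True not_in_closed_translate_span_zero[OF assms(1)] by simp
  then show ?thesis using lp_space_single by blast
next
  case False
  then obtain m where "F m \<noteq> 0" by blast
  obtain z where "z \<notin> span {F m}" using assms(3) by blast
  obtain \<omega> :: "'a \<Rightarrow> 'a \<Rightarrow> real" and x
    where \<omega>: "bounded_bilinear \<omega>" "\<forall>u v. \<omega> u v = - \<omega> v u" and "\<omega> x (F m) \<noteq> 0"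
    by (rule exists_antisymmetric_form[OF \<open>F m \<noteq> 0\<close> \<open>z \<notin> span {F m}\<close>])
  have "antidiagonal_pairing \<omega> (\<lambda>n. if n = - m then x else 0) F \<noteq> 0"
    using antidiagonal_pairing_single[OF \<omega>(1)] \<open>\<omega> x (F m) \<noteq> 0\<close> by simp
  then have "(\<lambda>n. if n = - m then x else 0) \<notin> closed_translate_span p F"
    by (rule not_in_closed_translate_span_antidiagonal_pairing[OF \<omega> assms(4,1,2)])
  then show ?thesis using lp_space_single by blast
qed

end
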